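(* Let $\mathcal{A}=(A_n)_n$ be a van Hove sequence consisting of intervals in $\mathbb{R}$. Let $\varLambda\subseteq\mathbb{R}$ be a uniformly discrete point set whose counting autocorrelation with respect to $\mathcal{A}$ is $\delta_0$ and such that $\lim_{n\to\infty}\mathrm{card}(\varLambda\cap A_n)=\infty$. Then for every nonzero integer $k$, the set $\varLambda\cup(k+\varLambda)$ has, with respect to $\mathcal{A}$, counting autocorrelation and counting diffraction \[\gamma_{\mathrm{count}}=\delta_0+\frac{\delta_k+\delta_{-k}}{2},\qquad \widehat{\gamma_{\mathrm{count}}}=(1+\cos(2\pi kx))\lambda,\] where $\lambda$ is Lebesgue measure.
   Context: For a finite set $F$, $\gamma_F=\frac{1}{\mathrm{card}(F)}\sum_{x,y\in F}\delta_{x-y}$ if $F\ne\emptyset$ and $\gamma_\emptyset=0$. The counting autocorrelation of a locally finite $X\subseteq\mathbb{R}$ with respect to $(A_n)_n$ is the vague limit of $\gamma_{X\cap A_n}$ (convergence on compactly supported continuous functions); its Fourier transform is the counting diffraction. A sequence of intervals $([a_n,b_n])_n$ is van Hove iff $b_n-a_n\to\infty$. Uniformly discrete means there is $r>0$ with $|x-y|\ge r$ for distinct $x,y\in\varLambda$. *)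

theory Defs
  imports "HOL-Analysis.Analysis"
begin

definition Cc_fun :: "(real \<Rightarrow> complex) \<Rightarrow> bool" where
  "Cc_fun f \<longleftrightarrow> continuous_on UNIV f \<and> compact (closure {x. f x \<noteq> 0})"

text \<open>Integral of a test function against
  gamma_F = (1 / card F) * sum over x,y in F of delta_(x-y), and gamma_{} = 0.\<close>
definition gamma_fin_int :: "real set \<Rightarrow> (real \<Rightarrow> complex) \<Rightarrow> complex" where
  "gamma_fin_int F f =
     (if F = {} then 0 else (\<Sum>x\<in>F. \<Sum>y\<in>F. f (x - y)) / of_nat (card F))"

definition counting_autocorrelation ::
  "real set \<Rightarrow> (nat \<Rightarrow> real set) \<Rightarrow> real measure \<Rightarrow> bool" where
  "counting_autocorrelation X A \<gamma> \<longleftrightarrow>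
     (\<forall>f. Cc_fun f \<longrightarrow> complex_integrable \<gamma> f \<and>
        (\<lambda>n. gamma_fin_int (X \<inter> A n) f) \<longlonglongrightarrow> (LINT x|\<gamma>. f x))"

definition weighted_dirac :: "real set \<Rightarrow> (real \<Rightarrow> real) \<Rightarrow> real measure" where
  "weighted_dirac S w = measure_of UNIV (sets borel) (\<lambda>B. \<Sum>x\<in>S \<inter> B. ennreal (w x))"

fun vderiv_iter :: "nat \<Rightarrow> (real \<Rightarrow> complex) \<Rightarrow> real \<Rightarrow> complex" where
  "vderiv_iter 0 \<phi> = \<phi>"
| "vderiv_iter (Suc n) \<phi> = (\<lambda>x. vector_derivative (vderiv_iter n \<phi>) (at x))"

definition schwartz :: "(real \<Rightarrow> complex) \<Rightarrow> bool" where
  "schwartz \<phi> \<longleftrightarrow>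
     (\<forall>n x. (vderiv_iter n \<phi> has_vector_derivative vderiv_iter (Suc n) \<phi> x) (at x)) \<and>
     (\<forall>n m. bounded (range (\<lambda>x. complex_of_real (x ^ m) * vderiv_iter n \<phi> x)))"

definition fourier :: "(real \<Rightarrow> complex) \<Rightarrow> real \<Rightarrow> complex" where
  "fourier \<phi> \<xi> = (LINT x|lborel. \<phi> x * cis (- 2 * pi * x * \<xi>))"

text \<open>\<nu> is the Fourier transform of the measure \<gamma> (in the sense of tempered distributions):
  \<gamma>(\<phi>^) = \<nu>(\<phi>) for every Schwartz function \<phi>.\<close>
definition measure_fourier :: "real measure \<Rightarrow> real measure \<Rightarrow> bool" where
  "measure_fourier \<gamma> \<nu> \<longleftrightarrow>
     (\<forall>\<phi>. schwartz \<phi> \<longrightarrow>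
        complex_integrable \<gamma> (fourier \<phi>) \<and> complex_integrable \<nu> \<phi> \<and>
        (LINT x|\<gamma>. fourier \<phi> x) = (LINT x|\<nu>. \<phi> x))"

definition counting_diffraction ::
  "real set \<Rightarrow> (nat \<Rightarrow> real set) \<Rightarrow> real measure \<Rightarrow> bool" where
  "counting_diffraction X A \<nu> \<longleftrightarrow>
     (\<exists>\<gamma>. counting_autocorrelation X A \<gamma> \<and> measure_fourier \<gamma> \<nu>)"

definition uniformly_discrete :: "real set \<Rightarrow> bool" where
  "uniformly_discrete L \<longleftrightarrow> (\<exists>r>0. \<forall>x\<in>L. \<forall>y\<in>L. x \<noteq> y \<longrightarrow> r \<le> \<bar>x - y\<bar>)"

end

theory Submission
  imports Defs "HOL-Probability.Sinc_Integral"
begin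

text \<open>
  Write X for \<Lambda> \<union> (k + \<Lambda>) and L_n for \<Lambda> \<inter> A_n. Inside the window A_n the set X agrees with
  L_n \<union> (k + L_n), up to points of \<Lambda> within distance |k| of the two endpoints, whose number is
  bounded independently of n by uniform discreteness. So the double sum of f(x - y) over pairs
  of points of X \<inter> A_n splits into four double sums over L_n, tested against f, f(z - k), f(z + k)
  and f; normalised by card L_n they tend to 2 f(0) + f(-k) + f(k) because the autocorrelation
  of \<Lambda> is \<delta>_0, while card (X \<inter> A_n) is 2 card L_n up to the same errors. The remaining error
  comes from points lying in both L_n and k + L_n. Their number is dominated by the double sum
  over L_n of a tent function g with g(k) = 1 and g(0) = 0, hence it is o(card L_n) as well.
  All error terms are negligible because card L_n tends to infinity.

  The diffraction is the Fourier transform of \<delta>_0 + (\<delta>_k + \<delta>_-k)/2, computed directly against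
  Schwartz functions: the two point masses at \<plusminus>k contribute the integral of \<phi>(x) cos(2\<pi>kx).
\<close>

lemma tendsto_divide_of_real_perturb:
  fixes x y :: "nat \<Rightarrow> 'a::real_normed_field"
  assumes lim: "(\<lambda>n. x n / of_real (N n)) \<longlonglongrightarrow> \<alpha>"
    and small: "(\<lambda>n. e n / N n) \<longlonglongrightarrow> 0"
    and close: "\<And>n. norm (y n - x n) \<le> C * e n"
    and N: "\<And>n. 0 \<le> N n"
  shows "(\<lambda>n. y n / of_real (N n)) \<longlonglongrightarrow> \<alpha>"
proof -
  have "(\<lambda>n. (y n - x n) / of_real (N n)) \<longlonglongrightarrow> 0"
  proof (rule Lim_null_comparison)
    show "\<forall>\<^sub>F n in sequentially. norm ((y n - x n) / of_real (N n)) \<le> C * (e n / N n)"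
      using close N by (auto simp: norm_divide divide_right_mono)
    show "(\<lambda>n. C * (e n / N n)) \<longlonglongrightarrow> 0"
      using tendsto_mult_right_zero[OF small] .
  qed
  from tendsto_add[OF lim this] show ?thesis
    by (simp add: diff_divide_distrib)
qed

lemma tendsto_divide_change_denominator:
  fixes y :: "nat \<Rightarrow> 'a::real_normed_field"
  assumes y: "(\<lambda>n. y n / of_real (N n)) \<longlonglongrightarrow> \<alpha>"
    and M: "(\<lambda>n. M n / N n) \<longlonglongrightarrow> c" and c: "c \<noteq> 0"
    and N: "\<forall>\<^sub>F n in sequentially. N n \<noteq> 0"
  shows "(\<lambda>n. y n / of_real (M n)) \<longlonglongrightarrow> \<alpha> / of_real c"
proof -
  have "(\<lambda>n. (y n / of_real (N n)) / of_real (M n / N n)) \<longlonglongrightarrow> \<alpha> / of_real c"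
    using c by (intro tendsto_divide y tendsto_of_real M) simp
  moreover have "\<forall>\<^sub>F n in sequentially.
      (y n / of_real (N n)) / of_real (M n / N n) = y n / of_real (M n)"
    using N by eventually_elim (simp add: of_real_divide)
  ultimately show ?thesis
    by (rule Lim_transform_eventually)
qed

lemma weighted_dirac_eq_distr:
  assumes "finite S" "\<And>x. x \<in> S \<Longrightarrow> w x \<ge> 0"
  shows "weighted_dirac S w = distr (density (count_space S) (\<lambda>x. ennreal (w x))) borel (\<lambda>x. x)"
    (is "_ = ?M")
proof -
  have "weighted_dirac S w = measure_of UNIV (sets borel) (emeasure ?M)"
    unfolding weighted_dirac_def
  proof (rule measure_of_eq)
    fix B :: "real set" assume "B \<in> sigma_sets UNIV (sets borel)"
    then have "B \<in> sets borel" by (metis sets.sigma_sets_eq space_borel)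
    then have "emeasure ?M B = (\<Sum>x\<in>S \<inter> B. ennreal (w x))"
      using assms(1)
      by (simp add: emeasure_distr emeasure_density nn_integral_count_space_finite Int_commute
          indicator_def if_distrib sum.If_cases)
    then show "(\<Sum>x\<in>S \<inter> B. ennreal (w x)) = emeasure ?M B" ..
  qed simp
  then show ?thesis
    using measure_of_of_measure[of ?M] by simp
qed

lemma
  fixes f :: "real \<Rightarrow> complex"
  assumes "finite S" "\<And>x. x \<in> S \<Longrightarrow> w x \<ge> 0" "f \<in> borel_measurable borel"
  shows integrable_weighted_dirac: "complex_integrable (weighted_dirac S w) f"
    and integral_weighted_dirac: "(LINT x|weighted_dirac S w. f x) = (\<Sum>x\<in>S. of_real (w x) * f x)"
  using assms
  by (simp_all add: weighted_dirac_eq_distr integrable_distr_eq integral_distr integrable_density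
      integral_density integrable_count_space lebesgue_integral_count_space_finite AE_count_space
      scaleR_conv_of_real)

lemma Cc_fun_borel_measurable: "Cc_fun f \<Longrightarrow> f \<in> borel_measurable borel"
  unfolding Cc_fun_def by (intro borel_measurable_continuous_onI) blast

lemma Cc_funE:
  assumes "Cc_fun f"
  obtains R B where "\<And>z. R < \<bar>z\<bar> \<Longrightarrow> f z = 0" "\<And>z. norm (f z) \<le> B"
proof -
  define S where "S = closure {x. f x \<noteq> 0}"
  have "compact S" "continuous_on S f"
    using assms continuous_on_subset unfolding Cc_fun_def S_def by blast+
  then have "bounded S" "bounded (f ` S)"
    by (auto intro: compact_imp_bounded compact_continuous_image)
  then obtain R B where R: "\<forall>x\<in>S. norm x \<le> R" and B: "\<forall>y\<in>f ` S. norm y \<le> B"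
    unfolding bounded_iff by blast
  have support: "z \<in> S" if "f z \<noteq> 0" for z
    using that closure_subset[of "{x. f x \<noteq> 0}"] unfolding S_def by blast
  show thesis
  proof (rule that)
    show "f z = 0" if "R < \<bar>z\<bar>" for z
    proof (rule ccontr)
      assume "f z \<noteq> 0"
      then have "norm z \<le> R" using support R by blast
      with that show False by simp
    qed
    show "norm (f z) \<le> max B 0" for z
    proof (cases "f z = 0")
      case False
      then have "norm (f z) \<le> B" using support B by blast
      then show ?thesis by simp
    qed simp
  qed
qed

lemma Cc_funI:
  assumes "continuous_on UNIV f" "\<And>z. R < \<bar>z\<bar> \<Longrightarrow> f z = 0"
  shows "Cc_fun f"
proof -
  have "{x. f x \<noteq> 0} \<subseteq> cball 0 R"
    using assms(2) by (force simp: mem_cball_0)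
  then have "closure {x. f x \<noteq> 0} \<subseteq> cball 0 R"
    by (intro closure_minimal) auto
  then have "compact (closure {x. f x \<noteq> 0})"
    by (meson bounded_cball bounded_subset closed_closure compact_eq_bounded_closed)
  then show ?thesis
    unfolding Cc_fun_def using assms(1) by blast
qed

lemma Cc_fun_shift:
  assumes "Cc_fun f"
  shows "Cc_fun (\<lambda>z. f (z + s))"
proof -
  obtain R where R: "\<And>z. R < \<bar>z\<bar> \<Longrightarrow> f z = 0"
    using Cc_funE[OF assms] by blast
  have "continuous_on UNIV f"
    using assms unfolding Cc_fun_def by blast
  then have "continuous_on UNIV (\<lambda>z. f (z + s))"
    by (rule continuous_on_compose2) (auto intro!: continuous_intros)
  moreover have "f (z + s) = 0" if "R + \<bar>s\<bar> < \<bar>z\<bar>" for z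
    using that by (intro R) linarith
  ultimately show ?thesis
    by (rule Cc_funI)
qed

lemma Cc_fun_tent:
  fixes t :: real
  assumes "t \<noteq> 0"
  obtains g :: "real \<Rightarrow> real"
  where "\<And>z. 0 \<le> g z" "g t = 1" "g 0 = 0" "Cc_fun (\<lambda>z. complex_of_real (g z))"
proof
  let ?g = "\<lambda>z. max 0 (1 - 2 * \<bar>z - t\<bar> / \<bar>t\<bar>)"
  show "0 \<le> ?g z" "?g t = 1" "?g 0 = 0" for z
    using assms by simp_all
  show "Cc_fun (\<lambda>z. complex_of_real (?g z))"
  proof (rule Cc_funI)
    show "continuous_on UNIV (\<lambda>z. complex_of_real (?g z))"
      using assms by (intro continuous_intros) auto
    show "complex_of_real (?g z) = 0" if "2 * \<bar>t\<bar> < \<bar>z\<bar>" for z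
    proof -
      have "\<bar>t\<bar> \<le> 2 * \<bar>z - t\<bar>"
        using that by (smt (verit))
      then show ?thesis
        using assms by simp
    qed
  qed
qed

section \<open>Uniformly discrete sets\<close>

lemma uniformly_discrete_card_interval_le:
  assumes r: "r > 0" and sep: "\<forall>x\<in>W. \<forall>y\<in>W. x \<noteq> y \<longrightarrow> r \<le> \<bar>x - y\<bar>"
  shows "finite (W \<inter> {c..d}) \<and> card (W \<inter> {c..d}) \<le> nat (\<lfloor>(d - c) / r\<rfloor> + 1)"
proof -
  define h where "h y = \<lfloor>(y - c) / r\<rfloor>" for y
  have h_less: "h u < h v" if "u \<in> W" "v \<in> W" "u < v" for u v
  proof -
    have "r \<le> v - u" using sep that by force
    then have "1 \<le> (v - u) / r" using r by simp
    also have "(v - u) / r = (v - c) / r - (u - c) / r" by (simp add: diff_divide_distrib)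
    finally have "(u - c) / r + 1 \<le> (v - c) / r" by simp
    then have "\<lfloor>(u - c) / r + 1\<rfloor> \<le> \<lfloor>(v - c) / r\<rfloor>" by (rule floor_mono)
    then show ?thesis unfolding h_def by simp
  qed
  have inj: "inj_on h (W \<inter> {c..d})"
  proof (rule inj_onI)
    fix u v assume "u \<in> W \<inter> {c..d}" "v \<in> W \<inter> {c..d}" "h u = h v"
    then show "u = v" using h_less[of u v] h_less[of v u] by (cases u v rule: linorder_cases) auto
  qed
  have range: "h ` (W \<inter> {c..d}) \<subseteq> {0..\<lfloor>(d - c) / r\<rfloor>}"
  proof
    fix z assume "z \<in> h ` (W \<inter> {c..d})"
    then obtain y where "y \<in> {c..d}" "z = h y" by blast
    moreover have "0 \<le> (y - c) / r" "(y - c) / r \<le> (d - c) / r"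
      using calculation(1) r by (auto intro: divide_right_mono)
    ultimately show "z \<in> {0..\<lfloor>(d - c) / r\<rfloor>}" unfolding h_def by (auto intro: floor_mono)
  qed
  have "finite (W \<inter> {c..d})"
    using inj range by (meson finite_atLeastAtMost_int finite_imageD finite_subset)
  moreover have "card (W \<inter> {c..d}) \<le> card {0..\<lfloor>(d - c) / r\<rfloor>}"
    using card_inj_on_le[OF inj range] by simp
  ultimately show ?thesis by simp
qed

lemma uniformly_discrete_finite_Int_interval:
  assumes "uniformly_discrete W"
  shows "finite (W \<inter> {c..d})"
proof -
  obtain r where "r > 0" "\<forall>x\<in>W. \<forall>y\<in>W. x \<noteq> y \<longrightarrow> r \<le> \<bar>x - y\<bar>"
    using assms unfolding uniformly_discrete_def by blast
  then show ?thesis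
    using uniformly_discrete_card_interval_le by blast
qed

lemma uniformly_discrete_card_window_bounded:
  assumes "uniformly_discrete W"
  obtains K where "\<And>c. card (W \<inter> {c..c + l}) \<le> K"
proof -
  obtain r where "r > 0" "\<forall>x\<in>W. \<forall>y\<in>W. x \<noteq> y \<longrightarrow> r \<le> \<bar>x - y\<bar>"
    using assms unfolding uniformly_discrete_def by blast
  note card_le = uniformly_discrete_card_interval_le[OF this]
  have "card (W \<inter> {c..c + l}) \<le> nat (\<lfloor>l / r\<rfloor> + 1)" for c
    using card_le[of c "c + l"] by simp
  then show thesis by (rule that)
qed

lemma interval_diff_translate_subset:
  fixes a b s :: real
  shows "{a..b} - {a + s..b + s} \<subseteq> {a - \<bar>s\<bar>..a + \<bar>s\<bar>} \<union> {b - \<bar>s\<bar>..b + \<bar>s\<bar>}"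
proof
  fix x assume "x \<in> {a..b} - {a + s..b + s}"
  then have "a \<le> x" "x \<le> b" "x < a + s \<or> b + s < x" by auto
  then show "x \<in> {a - \<bar>s\<bar>..a + \<bar>s\<bar>} \<union> {b - \<bar>s\<bar>..b + \<bar>s\<bar>}"
    by (cases "0 \<le> s") auto
qed

definition point_sums_bounded :: "real set \<Rightarrow> (real \<Rightarrow> complex) \<Rightarrow> real \<Rightarrow> bool" where
  "point_sums_bounded W f M \<longleftrightarrow>
     (\<forall>x V. finite V \<longrightarrow> V \<subseteq> W \<longrightarrow>
        (\<Sum>y\<in>V. norm (f (x - y))) \<le> M \<and> (\<Sum>y\<in>V. norm (f (y - x))) \<le> M)"

lemma point_sums_bounded_nonneg: "point_sums_bounded W f M \<Longrightarrow> 0 \<le> M"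
  unfolding point_sums_bounded_def by (metis empty_subsetI finite.emptyI sum.empty)

lemma point_sums_bounded_Un:
  assumes "point_sums_bounded W1 f M1" "point_sums_bounded W2 f M2"
  shows "point_sums_bounded (W1 \<union> W2) f (M1 + M2)"
  unfolding point_sums_bounded_def
proof (intro allI impI)
  fix x V assume V: "finite V" "V \<subseteq> W1 \<union> W2"
  have sum_split: "sum g V = sum g (V \<inter> W1) + sum g (V - W1)" for g :: "real \<Rightarrow> real"
    using V(1) by (rule sum.Int_Diff)
  have "V \<inter> W1 \<subseteq> W1" "V - W1 \<subseteq> W2" "finite (V \<inter> W1)" "finite (V - W1)"
    using V by auto
  then show "(\<Sum>y\<in>V. norm (f (x - y))) \<le> M1 + M2 \<and> (\<Sum>y\<in>V. norm (f (y - x))) \<le> M1 + M2"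
    using assms unfolding point_sums_bounded_def sum_split by (meson add_mono)
qed

lemma point_sums_bounded_translate:
  assumes "point_sums_bounded W f M"
  shows "point_sums_bounded ((\<lambda>x. s + x) ` W) f M"
  unfolding point_sums_bounded_def
proof (intro allI impI)
  fix x V assume V: "finite V" "V \<subseteq> (\<lambda>x. s + x) ` W"
  define V0 where "V0 = (\<lambda>y. y - s) ` V"
  have V0: "finite V0" "V0 \<subseteq> W" "V = (\<lambda>y. s + y) ` V0"
    using V unfolding V0_def by (auto simp: image_image)
  have "inj_on (\<lambda>y. s + y) V0" by simp
  then have "(\<Sum>y\<in>V. norm (f (x - y))) = (\<Sum>y\<in>V0. norm (f ((x - s) - y)))"
    "(\<Sum>y\<in>V. norm (f (y - x))) = (\<Sum>y\<in>V0. norm (f (y - (x - s))))"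
    unfolding V0(3) by (simp_all add: sum.reindex algebra_simps)
  then show "(\<Sum>y\<in>V. norm (f (x - y))) \<le> M \<and> (\<Sum>y\<in>V. norm (f (y - x))) \<le> M"
    using assms V0 unfolding point_sums_bounded_def by simp
qed

lemma point_sums_bounded_shift:
  assumes "point_sums_bounded W f M"
  shows "point_sums_bounded W (\<lambda>z. f (z + s)) M"
  unfolding point_sums_bounded_def
proof (intro allI impI)
  fix x V assume "finite V" "V \<subseteq> W"
  then have "(\<Sum>y\<in>V. norm (f ((x + s) - y))) \<le> M \<and> (\<Sum>y\<in>V. norm (f (y - (x - s)))) \<le> M"
    using assms unfolding point_sums_bounded_def by blast
  then show "(\<Sum>y\<in>V. norm (f (x - y + s))) \<le> M \<and> (\<Sum>y\<in>V. norm (f (y - x + s))) \<le> M"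
    by (simp add: algebra_simps)
qed

lemma uniformly_discrete_point_sums_bounded:
  assumes "uniformly_discrete W" "Cc_fun f"
  obtains M where "point_sums_bounded W f M"
proof -
  obtain R B where R: "\<And>z. R < \<bar>z\<bar> \<Longrightarrow> f z = 0" and B: "\<And>z. norm (f z) \<le> B"
    using Cc_funE[OF assms(2)] by blast
  have "0 \<le> B"
    using B[of 0] norm_ge_zero order_trans by blast
  obtain K where K: "\<And>c. card (W \<inter> {c..c + 2 * R}) \<le> K"
    using uniformly_discrete_card_window_bounded[OF assms(1)] by blast
  have bound: "(\<Sum>y\<in>V. norm (f (h y))) \<le> K * B"
    if V: "finite V" "V \<subseteq> W" and h: "\<And>y. \<bar>h y\<bar> = \<bar>x - y\<bar>" for x V h
  proof -
    let ?V = "V \<inter> {x - R..x - R + 2 * R}"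
    have "(\<Sum>y\<in>V. norm (f (h y))) = (\<Sum>y\<in>?V. norm (f (h y)))"
      using V(1) h by (intro sum.mono_neutral_right) (auto intro!: R)
    also have "\<dots> \<le> card ?V * B"
      using sum_bounded_above[of ?V "\<lambda>y. norm (f (h y))" B] B by simp
    also have "card ?V \<le> card (W \<inter> {x - R..x - R + 2 * R})"
      using V(2) uniformly_discrete_finite_Int_interval[OF assms(1)] by (intro card_mono) auto
    with K[of "x - R"] have "card ?V * B \<le> K * B"
      using \<open>0 \<le> B\<close> by (intro mult_right_mono) auto
    finally show ?thesis .
  qed
  have "(\<Sum>y\<in>V. norm (f (x - y))) \<le> K * B" "(\<Sum>y\<in>V. norm (f (y - x))) \<le> K * B"
    if "finite V" "V \<subseteq> W" for x V
    using bound[OF that, where h = "\<lambda>y. x - y"] bound[OF that, where h = "\<lambda>y. y - x"]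
    by (simp_all add: abs_minus_commute)
  then have "point_sums_bounded W f (K * B)"
    unfolding point_sums_bounded_def by blast
  then show thesis by (rule that)
qed

section \<open>Pair sums\<close>

definition pair_sum :: "real set \<Rightarrow> real set \<Rightarrow> (real \<Rightarrow> complex) \<Rightarrow> complex" where
  "pair_sum U V f = (\<Sum>x\<in>U. \<Sum>y\<in>V. f (x - y))"

lemma gamma_fin_int_eq_pair_sum: "gamma_fin_int F f = pair_sum F F f / of_nat (card F)"
  unfolding gamma_fin_int_def pair_sum_def by simp

lemma pair_sum_swap: "pair_sum U V f = pair_sum V U (\<lambda>z. f (- z))"
  unfolding pair_sum_def by (subst sum.swap) simp

lemma pair_sum_Un_left:
  "finite U1 \<Longrightarrow> finite U2 \<Longrightarrow> U1 \<inter> U2 = {} \<Longrightarrow>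
    pair_sum (U1 \<union> U2) V f = pair_sum U1 V f + pair_sum U2 V f"
  unfolding pair_sum_def by (simp add: sum.union_disjoint)

lemma pair_sum_Un_right:
  "finite V1 \<Longrightarrow> finite V2 \<Longrightarrow> V1 \<inter> V2 = {} \<Longrightarrow>
    pair_sum U (V1 \<union> V2) f = pair_sum U V1 f + pair_sum U V2 f"
  unfolding pair_sum_def by (simp add: sum.union_disjoint sum.distrib)

lemma pair_sum_translate_left:
  "pair_sum ((\<lambda>x. s + x) ` U) V f = pair_sum U V (\<lambda>z. f (z + s))"
  unfolding pair_sum_def by (simp add: sum.reindex algebra_simps)

lemma pair_sum_translate_right:
  "pair_sum U ((\<lambda>x. s + x) ` V) f = pair_sum U V (\<lambda>z. f (z - s))"
  unfolding pair_sum_def by (simp add: sum.reindex algebra_simps)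

lemma pair_sum_translate:
  "pair_sum ((\<lambda>x. s + x) ` U) ((\<lambda>x. s + x) ` V) f = pair_sum U V f"
  by (simp add: pair_sum_translate_left pair_sum_translate_right)

lemma norm_pair_sum_le_left:
  fixes M :: real
  assumes "point_sums_bounded W f M" "finite V" "V \<subseteq> W"
  shows "norm (pair_sum U V f) \<le> card U * M"
proof -
  have "norm (pair_sum U V f) \<le> (\<Sum>x\<in>U. norm (\<Sum>y\<in>V. f (x - y)))"
    unfolding pair_sum_def by (rule norm_sum)
  also have "\<dots> \<le> (\<Sum>x\<in>U. \<Sum>y\<in>V. norm (f (x - y)))"
    by (intro sum_mono norm_sum)
  also have "\<dots> \<le> (\<Sum>x\<in>U. M)"
    using assms unfolding point_sums_bounded_def by (intro sum_mono) blast
  finally show ?thesis by simp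
qed

lemma norm_pair_sum_le_right:
  fixes M :: real
  assumes "point_sums_bounded W f M" "finite U" "U \<subseteq> W"
  shows "norm (pair_sum U V f) \<le> card V * M"
proof -
  have "point_sums_bounded W (\<lambda>z. f (- z)) M"
    using assms(1) unfolding point_sums_bounded_def by (simp add: minus_diff_eq)
  then show ?thesis
    unfolding pair_sum_swap[of U] using assms(2,3) by (rule norm_pair_sum_le_left)
qed

lemma pair_sum_diff_left:
  "finite U \<Longrightarrow> finite U' \<Longrightarrow>
    pair_sum U V f - pair_sum U' V f = pair_sum (U - U') V f - pair_sum (U' - U) V f"
  unfolding pair_sum_def by (simp add: sum.Int_Diff[of U _ U'] sum.Int_Diff[of U' _ U] Int_commute)

lemma pair_sum_diff_right:
  "finite V \<Longrightarrow> finite V' \<Longrightarrow>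
    pair_sum U V f - pair_sum U V' f = pair_sum U (V - V') f - pair_sum U (V' - V) f"
  unfolding pair_sum_def
  by (simp add: sum.Int_Diff[of V _ V'] sum.Int_Diff[of V' _ V] Int_commute sum.distrib
      sum_subtractf)

lemma norm_pair_sum_diff_le:
  fixes M :: real
  assumes M: "point_sums_bounded W f M"
    and fin: "finite U" "finite U'" "finite V" "finite V'"
    and sub: "U \<subseteq> W" "U' \<subseteq> W" "V \<subseteq> W" "V' \<subseteq> W"
  shows "norm (pair_sum U V f - pair_sum U' V' f)
    \<le> (card (U - U') + card (U' - U) + card (V - V') + card (V' - V)) * M"
proof -
  have "pair_sum U V f - pair_sum U' V' f
      = (pair_sum (U - U') V f - pair_sum (U' - U) V f)
        + (pair_sum U' (V - V') f - pair_sum U' (V' - V) f)"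
    using pair_sum_diff_left[OF fin(1,2), of V f] pair_sum_diff_right[OF fin(3,4), of U' f]
    by (simp add: algebra_simps)
  also have "norm \<dots> \<le> norm (pair_sum (U - U') V f) + norm (pair_sum (U' - U) V f)
      + (norm (pair_sum U' (V - V') f) + norm (pair_sum U' (V' - V) f))"
    by (intro norm_triangle_le add_mono norm_triangle_ineq4)
  also have "\<dots> \<le> card (U - U') * M + card (U' - U) * M + (card (V - V') * M + card (V' - V) * M)"
    using fin sub
    by (intro add_mono norm_pair_sum_le_left[OF M] norm_pair_sum_le_right[OF M]) auto
  finally show ?thesis by (simp add: algebra_simps)
qed

lemma norm_pair_sum_Un_le:
  fixes M :: real
  assumes M: "point_sums_bounded W f M"
    and fin: "finite P" "finite Q" and sub: "P \<subseteq> W" "Q \<subseteq> W"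
  shows "norm (pair_sum (P \<union> Q) (P \<union> Q) f
      - (pair_sum P P f + pair_sum P Q f + pair_sum Q P f + pair_sum Q Q f))
    \<le> 4 * M * card (P \<inter> Q)"
proof -
  let ?Q = "Q - P"
  have disj: "P \<union> Q = P \<union> ?Q" "P \<inter> ?Q = {}" "finite ?Q" "?Q \<subseteq> W"
    using fin sub by auto
  have "pair_sum (P \<union> ?Q) (P \<union> ?Q) f
      = pair_sum P P f + pair_sum P ?Q f + (pair_sum ?Q P f + pair_sum ?Q ?Q f)"
    by (simp only: pair_sum_Un_left[OF fin(1) disj(3,2)] pair_sum_Un_right[OF fin(1) disj(3,2)]
        ac_simps)
  then have "pair_sum (P \<union> Q) (P \<union> Q) f
      - (pair_sum P P f + pair_sum P Q f + pair_sum Q P f + pair_sum Q Q f)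
      = (pair_sum P ?Q f - pair_sum P Q f) + (pair_sum ?Q P f - pair_sum Q P f)
        + (pair_sum ?Q ?Q f - pair_sum Q Q f)"
    unfolding disj(1)[symmetric] by (simp add: algebra_simps)
  also have "norm \<dots> \<le> norm (pair_sum P ?Q f - pair_sum P Q f)
      + norm (pair_sum ?Q P f - pair_sum Q P f) + norm (pair_sum ?Q ?Q f - pair_sum Q Q f)"
    by (intro norm_triangle_le add_mono order.refl norm_triangle_ineq)
  also have "\<dots> \<le> card (P \<inter> Q) * M + card (P \<inter> Q) * M + 2 * card (P \<inter> Q) * M"
  proof -
    have diff: "Q - ?Q = P \<inter> Q" "?Q - Q = {}" by auto
    show ?thesis
      using norm_pair_sum_diff_le[OF M, of P P ?Q Q] norm_pair_sum_diff_le[OF M, of ?Q Q P P]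
        norm_pair_sum_diff_le[OF M, of ?Q Q ?Q Q] fin sub disj(3,4)
      unfolding diff by (intro add_mono) simp_all
  qed
  finally show ?thesis by (simp add: algebra_simps)
qed

lemma card_Int_translate_le_sum:
  fixes g :: "real \<Rightarrow> real"
  assumes fin: "finite U" "finite V" and g: "\<And>z. 0 \<le> g z" "g t = 1"
  shows "card (U \<inter> (\<lambda>x. t + x) ` V) \<le> (\<Sum>x\<in>U. \<Sum>y\<in>V. g (x - y))"
proof -
  let ?I = "U \<inter> (\<lambda>x. t + x) ` V"
  have "card ?I = (\<Sum>x\<in>?I. g (x - (x - t)))"
    using g by simp
  also have "\<dots> \<le> (\<Sum>x\<in>?I. \<Sum>y\<in>V. g (x - y))"
  proof (rule sum_mono)
    fix x assume "x \<in> ?I"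
    then have "x - t \<in> V" by auto
    then show "g (x - (x - t)) \<le> (\<Sum>y\<in>V. g (x - y))"
      using member_le_sum[of "x - t" V "\<lambda>y. g (x - y)"] fin(2) g(1) by blast
  qed
  also have "\<dots> \<le> (\<Sum>x\<in>U. \<Sum>y\<in>V. g (x - y))"
    using fin g(1) by (intro sum_mono2 sum_nonneg) auto
  finally show ?thesis .
qed

section \<open>The Fourier transform of the autocorrelation\<close>

lemma schwartz_continuous:
  assumes "schwartz \<phi>"
  shows "continuous_on UNIV \<phi>"
proof -
  have "(\<phi> has_vector_derivative vderiv_iter 1 \<phi> x) (at x)" for x
    using assms unfolding schwartz_def by (metis One_nat_def vderiv_iter.simps(1))
  then show ?thesis
    by (meson continuous_at_imp_continuous_on has_vector_derivative_continuous)
qed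

lemma schwartz_decay:
  assumes "schwartz \<phi>"
  obtains C where "\<And>x. norm (\<phi> x) \<le> C * inverse (1 + x\<^sup>2)"
proof -
  have "bounded (range (\<lambda>x. complex_of_real (x ^ m) * \<phi> x))" for m
    using assms unfolding schwartz_def by (metis vderiv_iter.simps(1))
  then obtain B0 B2 where B0: "\<And>x. norm (\<phi> x) \<le> B0"
    and B2: "\<And>x. norm (complex_of_real (x\<^sup>2) * \<phi> x) \<le> B2"
    unfolding bounded_iff by (metis (no_types, lifting) mult_1 of_real_1 power_0 rangeI)
  have "norm (\<phi> x) \<le> (B0 + B2) * inverse (1 + x\<^sup>2)" for x
  proof -
    have "(1 + x\<^sup>2) * norm (\<phi> x) \<le> B0 + B2"
      using B0[of x] B2[of x] by (simp add: norm_mult norm_power algebra_simps)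
    then show ?thesis
      by (simp add: field_simps add_pos_nonneg)
  qed
  then show thesis by (rule that)
qed

lemma schwartz_integrable:
  assumes "schwartz \<phi>"
  shows "complex_integrable lborel \<phi>"
proof -
  obtain C where C: "\<And>x. norm (\<phi> x) \<le> C * inverse (1 + x\<^sup>2)"
    using schwartz_decay[OF assms] by blast
  have "integrable lborel (\<lambda>x::real. inverse (1 + x\<^sup>2))"
    using integrable_inverse_1_plus_square by (simp add: set_integrable_def einterval_def)
  then have "integrable lborel (\<lambda>x::real. C * inverse (1 + x\<^sup>2))"
    by simp
  moreover have "\<phi> \<in> borel_measurable lborel"
    using borel_measurable_continuous_onI[OF schwartz_continuous[OF assms]] by simp
  moreover have "AE x in lborel. norm (\<phi> x) \<le> norm (C * inverse (1 + x\<^sup>2))"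
    using C by (auto intro: order_trans[OF _ abs_ge_self])
  ultimately show ?thesis
    by (rule Bochner_Integration.integrable_bound)
qed

lemma borel_measurable_fourier:
  assumes "continuous_on UNIV \<phi>"
  shows "fourier \<phi> \<in> borel_measurable borel"
proof -
  have "continuous_on UNIV (\<lambda>p::real \<times> real. \<phi> (snd p) * cis (- 2 * pi * snd p * fst p))"
    (is "continuous_on _ ?k")
    by (intro continuous_intros continuous_on_compose2[OF assms]) auto
  then have "?k \<in> borel_measurable (borel \<Otimes>\<^sub>M lborel)"
    by (subst measurable_cong_sets[of _ "borel \<Otimes>\<^sub>M borel" borel borel])
      (auto simp: borel_prod intro: borel_measurable_continuous_onI)
  then have "(\<lambda>(\<xi>, x). \<phi> x * cis (- 2 * pi * x * \<xi>)) \<in> borel_measurable (borel \<Otimes>\<^sub>M lborel)"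
    by (simp add: case_prod_beta)
  then show ?thesis
    unfolding fourier_def by (rule lborel.borel_measurable_lebesgue_integral)
qed

lemma integrable_bounded_continuous_mult:
  fixes g \<phi> :: "real \<Rightarrow> complex"
  assumes "complex_integrable lborel \<phi>" "continuous_on UNIV g" "\<And>x. norm (g x) \<le> 1"
  shows "complex_integrable lborel (\<lambda>x. g x * \<phi> x)"
proof (rule Bochner_Integration.integrable_bound[OF assms(1)])
  show "(\<lambda>x. g x * \<phi> x) \<in> borel_measurable lborel"
    using borel_measurable_continuous_onI[OF assms(2)] borel_measurable_integrable[OF assms(1)]
    by simp
  show "AE x in lborel. norm (g x * \<phi> x) \<le> norm (\<phi> x)"
    using assms(3) by (simp add: norm_mult mult_left_le_one_le)
qed

lemma fourier_add_fourier_uminus: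
  fixes \<phi> :: "real \<Rightarrow> complex"
  assumes "complex_integrable lborel \<phi>"
  shows "fourier \<phi> \<xi> + fourier \<phi> (- \<xi>)
    = 2 * (LINT x|lborel. complex_of_real (cos (2 * pi * \<xi> * x)) * \<phi> x)"
proof -
  have int: "complex_integrable lborel (\<lambda>x. cis (c * x) * \<phi> x)" for c
    using assms by (rule integrable_bounded_continuous_mult) (auto intro: continuous_intros)
  have "fourier \<phi> \<xi> + fourier \<phi> (- \<xi>)
      = (LINT x|lborel. cis ((- 2 * pi * \<xi>) * x) * \<phi> x)
        + (LINT x|lborel. cis ((2 * pi * \<xi>) * x) * \<phi> x)"
    unfolding fourier_def by (simp add: mult_ac)
  also have "\<dots> = (LINT x|lborel. cis ((- 2 * pi * \<xi>) * x) * \<phi> x + cis ((2 * pi * \<xi>) * x) * \<phi> x)"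
    by (rule Bochner_Integration.integral_add[OF int int, symmetric])
  also have "\<dots> = (LINT x|lborel. 2 * (complex_of_real (cos (2 * pi * \<xi> * x)) * \<phi> x))"
    by (rule Bochner_Integration.integral_cong) (simp_all add: complex_eq_iff algebra_simps)
  finally show ?thesis
    by simp
qed

lemma measure_fourier_cosine:
  fixes t :: real
  assumes "t \<noteq> 0"
  shows "measure_fourier (weighted_dirac {0, t, - t} (\<lambda>x. if x = 0 then 1 else 1 / 2))
           (density lborel (\<lambda>x. ennreal (1 + cos (2 * pi * t * x))))"
  unfolding measure_fourier_def
proof (intro allI impI conjI)
  fix \<phi> assume \<phi>: "schwartz \<phi>"
  let ?w = "\<lambda>x::real. if x = 0 then 1 else 1 / 2 :: real"
  let ?g = "\<lambda>x. 1 + cos (2 * pi * t * x)"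
  have int: "complex_integrable lborel \<phi>"
    by (rule schwartz_integrable[OF \<phi>])
  have meas: "\<phi> \<in> borel_measurable lborel" "?g \<in> borel_measurable lborel"
    using borel_measurable_integrable[OF int] by auto
  have g_nonneg: "0 \<le> ?g x" for x
    using cos_ge_minus_one[of "2 * pi * t * x"] by linarith
  have int_cos: "complex_integrable lborel (\<lambda>x. complex_of_real (cos (2 * pi * t * x)) * \<phi> x)"
    using int by (rule integrable_bounded_continuous_mult) (auto intro: continuous_intros)
  have fourier_meas: "fourier \<phi> \<in> borel_measurable borel"
    by (rule borel_measurable_fourier[OF schwartz_continuous[OF \<phi>]])
  show "complex_integrable (weighted_dirac {0, t, - t} ?w) (fourier \<phi>)"
    using fourier_meas by (intro integrable_weighted_dirac) auto
  show "complex_integrable (density lborel (\<lambda>x. ennreal (?g x))) \<phi>"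
    using int int_cos g_nonneg
    by (subst integrable_density[OF meas]) (auto simp: scaleR_conv_of_real distrib_right)
  have "(LINT x|weighted_dirac {0, t, - t} ?w. fourier \<phi> x)
      = fourier \<phi> 0 + (fourier \<phi> t + fourier \<phi> (- t)) / 2"
    using integral_weighted_dirac[of "{0, t, - t}" ?w "fourier \<phi>"] fourier_meas assms
    by (simp add: field_simps)
  also have "\<dots> = (LINT x|lborel. \<phi> x)
      + (LINT x|lborel. complex_of_real (cos (2 * pi * t * x)) * \<phi> x)"
    unfolding fourier_add_fourier_uminus[OF int] by (simp add: fourier_def)
  also have "\<dots> = (LINT x|lborel. ?g x *\<^sub>R \<phi> x)"
    using int int_cos by (simp add: scaleR_conv_of_real distrib_right)
  also have "\<dots> = (LINT x|density lborel (\<lambda>x. ennreal (?g x)). \<phi> x)"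
    using g_nonneg by (intro integral_density[OF meas, symmetric]) auto
  finally show "(LINT x|weighted_dirac {0, t, - t} ?w. fourier \<phi> x)
      = (LINT x|density lborel (\<lambda>x. ennreal (?g x)). \<phi> x)" .
qed

section \<open>The autocorrelation of a union of two translates\<close>

locale translate_union =
  fixes a b :: "nat \<Rightarrow> real" and \<Lambda> :: "real set" and t :: real
  assumes uniformly_discrete: "uniformly_discrete \<Lambda>"
    and autocorrelation: "counting_autocorrelation \<Lambda> (\<lambda>n. {a n..b n}) (weighted_dirac {0} (\<lambda>_. 1))"
    and card_to_infinity: "filterlim (\<lambda>n. card (\<Lambda> \<inter> {a n..b n})) at_top sequentially"
    and translation_nonzero: "t \<noteq> 0"
begin

abbreviation X :: "real set" where
  "X \<equiv> \<Lambda> \<union> (\<lambda>x. t + x) ` \<Lambda>"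

definition L :: "nat \<Rightarrow> real set" where
  "L n = \<Lambda> \<inter> {a n..b n}"

definition L' :: "nat \<Rightarrow> real set" where
  "L' n = \<Lambda> \<inter> {a n - t..b n - t}"

definition N :: "nat \<Rightarrow> real" where
  "N n = card (L n)"

definition overlap :: "nat \<Rightarrow> nat" where
  "overlap n = card (L n \<inter> (\<lambda>x. t + x) ` L' n)"

definition edge :: "nat \<Rightarrow> nat" where
  "edge n = card (L n - L' n) + card (L' n - L n)"

lemma finite_L: "finite (L n)" and finite_L': "finite (L' n)"
  unfolding L_def L'_def using uniformly_discrete
  by (auto intro: uniformly_discrete_finite_Int_interval)

lemma window_eq: "X \<inter> {a n..b n} = L n \<union> (\<lambda>x. t + x) ` L' n"
  unfolding L_def L'_def by (auto simp: algebra_simps)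

lemma N_to_infinity: "filterlim N at_top sequentially"
  unfolding N_def L_def using filterlim_compose[OF filterlim_real_sequentially card_to_infinity]
  by (simp add: o_def)

lemma N_nonneg: "0 \<le> N n"
  unfolding N_def by simp

lemma eventually_nonzero_N: "\<forall>\<^sub>F n in sequentially. N n \<noteq> 0"
proof -
  have "\<forall>\<^sub>F n in sequentially. 0 < N n"
    using N_to_infinity by (simp add: filterlim_at_top_dense)
  then show ?thesis
    by eventually_elim simp
qed

lemma edge_bounded: obtains D where "\<And>n. edge n \<le> D"
proof -
  obtain K where K: "\<And>c. card (\<Lambda> \<inter> {c..c + 2 * \<bar>t\<bar>}) \<le> K"
    using uniformly_discrete_card_window_bounded[OF uniformly_discrete] by blast
  have diff_le: "card (\<Lambda> \<inter> {c..d} - \<Lambda> \<inter> {c + s..d + s}) \<le> 2 * K" if "\<bar>s\<bar> = \<bar>t\<bar>" for c d s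
  proof -
    let ?E = "\<Lambda> \<inter> {c - \<bar>t\<bar>..c - \<bar>t\<bar> + 2 * \<bar>t\<bar>} \<union> \<Lambda> \<inter> {d - \<bar>t\<bar>..d - \<bar>t\<bar> + 2 * \<bar>t\<bar>}"
    have "\<Lambda> \<inter> {c..d} - \<Lambda> \<inter> {c + s..d + s} \<subseteq> ?E"
      using interval_diff_translate_subset[of c d s] that by auto
    moreover have "finite ?E"
      using uniformly_discrete by (auto intro: uniformly_discrete_finite_Int_interval)
    ultimately have "card (\<Lambda> \<inter> {c..d} - \<Lambda> \<inter> {c + s..d + s}) \<le> card ?E"
      by (rule card_mono[rotated])
    also have "\<dots> \<le> K + K"
      using card_Un_le K add_mono order_trans by metis
    finally show ?thesis by simp
  qed
  have "edge n \<le> 4 * K" for n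
    using diff_le[of "- t" "a n" "b n"] diff_le[of t "a n - t" "b n - t"]
    unfolding edge_def L_def L'_def by simp
  then show thesis by (rule that)
qed

lemma point_sums_bounded_X:
  assumes "Cc_fun f"
  obtains M where "point_sums_bounded X f M"
proof -
  obtain M where "point_sums_bounded \<Lambda> f M"
    using uniformly_discrete_point_sums_bounded[OF uniformly_discrete assms] by blast
  then have "point_sums_bounded X f (M + M)"
    by (intro point_sums_bounded_Un point_sums_bounded_translate)
  then show thesis by (rule that)
qed

lemma pair_sum_L_limit:
  assumes "Cc_fun h"
  shows "(\<lambda>n. pair_sum (L n) (L n) h / of_real (N n)) \<longlonglongrightarrow> h 0"
proof -
  have "(\<lambda>n. gamma_fin_int (L n) h) \<longlonglongrightarrow> (LINT x|weighted_dirac {0} (\<lambda>_. 1). h x)"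
    using autocorrelation assms unfolding counting_autocorrelation_def L_def by blast
  moreover have "(LINT x|weighted_dirac {0} (\<lambda>_. 1). h x) = h 0"
    using integral_weighted_dirac[of "{0}" "\<lambda>_. 1" h] Cc_fun_borel_measurable[OF assms] by simp
  ultimately show ?thesis
    unfolding gamma_fin_int_eq_pair_sum N_def by simp
qed

lemma L_subset: "L n \<subseteq> X" and L'_subset: "L' n \<subseteq> X"
  unfolding L_def L'_def by auto

lemma norm_pair_sum_L'_diff_le:
  fixes M :: real
  assumes M: "point_sums_bounded X f M"
  shows "norm (pair_sum (L n) (L' n) f - pair_sum (L n) (L n) f) \<le> edge n * M"
    and "norm (pair_sum (L' n) (L n) f - pair_sum (L n) (L n) f) \<le> edge n * M"
    and "norm (pair_sum (L' n) (L' n) f - pair_sum (L n) (L n) f) \<le> 2 * (edge n * M)"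
  using norm_pair_sum_diff_le[OF M, of "L n" "L n" "L' n" "L n"]
    norm_pair_sum_diff_le[OF M, of "L' n" "L n" "L n" "L n"]
    norm_pair_sum_diff_le[OF M, of "L' n" "L n" "L' n" "L n"]
    finite_L finite_L' L_subset L'_subset
  unfolding edge_def by (simp_all add: algebra_simps)

lemma overlap_le:
  fixes g :: "real \<Rightarrow> real" and M :: real
  assumes g: "\<And>z. 0 \<le> g z" "g t = 1"
    and M: "point_sums_bounded X (\<lambda>z. complex_of_real (g z)) M"
  shows "overlap n \<le> Re (pair_sum (L n) (L n) (\<lambda>z. complex_of_real (g z))) + edge n * M"
proof -
  let ?g = "\<lambda>z. complex_of_real (g z)"
  have "overlap n \<le> Re (pair_sum (L n) (L' n) ?g)"
    using card_Int_translate_le_sum[of "L n" "L' n" g] finite_L finite_L' g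
    unfolding overlap_def pair_sum_def by simp
  also have "\<dots> \<le> Re (pair_sum (L n) (L n) ?g)
      + norm (pair_sum (L n) (L' n) ?g - pair_sum (L n) (L n) ?g)"
    using complex_Re_le_cmod[of "pair_sum (L n) (L' n) ?g - pair_sum (L n) (L n) ?g"] by simp
  also have "norm (pair_sum (L n) (L' n) ?g - pair_sum (L n) (L n) ?g) \<le> edge n * M"
    by (rule norm_pair_sum_L'_diff_le(1)[OF M])
  finally show ?thesis by simp
qed

lemma overlap_negligible:
  fixes D :: nat
  shows "(\<lambda>n. (overlap n + D) / N n) \<longlonglongrightarrow> 0"
proof -
  obtain g where g: "\<And>z. 0 \<le> g z" "g t = 1" "g 0 = 0"
    and Cc: "Cc_fun (\<lambda>z. complex_of_real (g z))"
    using Cc_fun_tent[OF translation_nonzero] by blast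
  let ?g = "\<lambda>z. complex_of_real (g z)"
  obtain M where M: "point_sums_bounded X ?g M"
    using point_sums_bounded_X[OF Cc] by blast
  obtain E where E: "\<And>n. edge n \<le> E"
    using edge_bounded by blast
  let ?u = "\<lambda>n. Re (pair_sum (L n) (L n) ?g / of_real (N n)) + (E * M + D) * (1 / N n)"
  have "?u \<longlonglongrightarrow> Re (?g 0) + (E * M + D) * 0"
    using N_to_infinity
    by (intro tendsto_intros pair_sum_L_limit Cc)
      (simp add: tendsto_inverse_0_at_top flip: inverse_eq_divide)
  then have upper: "?u \<longlonglongrightarrow> 0"
    using g(3) by simp
  have "(overlap n + D) / N n \<le> ?u n" for n
  proof -
    have "edge n * M \<le> E * M"
      using E[of n] point_sums_bounded_nonneg[OF M] by (intro mult_right_mono) auto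
    then have "overlap n + D \<le> Re (pair_sum (L n) (L n) ?g) + (E * M + D)"
      using overlap_le[OF g(1,2) M, of n] by linarith
    then show ?thesis
      unfolding N_def
      by (auto simp: Re_divide_of_real divide_right_mono add_divide_distrib[symmetric])
  qed
  then show ?thesis
    by (intro tendsto_sandwich[OF _ _ tendsto_const upper]) (auto simp: N_def)
qed

lemma card_window_estimate:
  "\<bar>card (X \<inter> {a n..b n}) - 2 * N n\<bar> \<le> overlap n + edge n"
proof -
  let ?Q = "(\<lambda>x. t + x) ` L' n"
  have "card (L n \<union> ?Q) + overlap n = card (L n) + card (L' n)"
    using card_Un_Int[of "L n" ?Q] finite_L finite_L' card_image[of "\<lambda>x. t + x" "L' n"]
    unfolding overlap_def by simp
  moreover have "card (L' n) \<le> card (L n) + card (L' n - L n)"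
    and "card (L n) \<le> card (L' n) + card (L n - L' n)"
    using diff_card_le_card_Diff[OF finite_L[of n], of "L' n"]
      diff_card_le_card_Diff[OF finite_L'[of n], of "L n"]
    by linarith+
  ultimately show ?thesis
    unfolding window_eq N_def edge_def by linarith
qed

lemma pair_sum_window_estimate:
  fixes M :: real
  assumes M: "point_sums_bounded X f M"
  shows "norm (pair_sum (X \<inter> {a n..b n}) (X \<inter> {a n..b n}) f
      - (2 * pair_sum (L n) (L n) f + pair_sum (L n) (L n) (\<lambda>z. f (z - t))
         + pair_sum (L n) (L n) (\<lambda>z. f (z + t))))
    \<le> 4 * M * (overlap n + edge n)"
proof -
  let ?Q = "(\<lambda>x. t + x) ` L' n"
  have M_minus: "point_sums_bounded X (\<lambda>z. f (z - t)) M"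
    using point_sums_bounded_shift[OF M, of "- t"] by simp
  have M_plus: "point_sums_bounded X (\<lambda>z. f (z + t)) M"
    by (rule point_sums_bounded_shift[OF M])
  have "?Q \<subseteq> X"
    unfolding L'_def by auto
  then have union: "norm (pair_sum (L n \<union> ?Q) (L n \<union> ?Q) f
      - (pair_sum (L n) (L n) f + pair_sum (L n) ?Q f + pair_sum ?Q (L n) f + pair_sum ?Q ?Q f))
    \<le> 4 * M * overlap n"
    using norm_pair_sum_Un_le[OF M, of "L n" ?Q] finite_L finite_L' L_subset
    unfolding overlap_def by simp
  have translate: "pair_sum (L n) ?Q f = pair_sum (L n) (L' n) (\<lambda>z. f (z - t))"
    "pair_sum ?Q (L n) f = pair_sum (L' n) (L n) (\<lambda>z. f (z + t))"
    "pair_sum ?Q ?Q f = pair_sum (L' n) (L' n) f"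
    by (simp_all add: pair_sum_translate_right pair_sum_translate_left pair_sum_translate)
  let ?e0 = "pair_sum (L n \<union> ?Q) (L n \<union> ?Q) f
        - (pair_sum (L n) (L n) f + pair_sum (L n) ?Q f + pair_sum ?Q (L n) f + pair_sum ?Q ?Q f)"
    and ?e1 = "pair_sum (L n) (L' n) (\<lambda>z. f (z - t)) - pair_sum (L n) (L n) (\<lambda>z. f (z - t))"
    and ?e2 = "pair_sum (L' n) (L n) (\<lambda>z. f (z + t)) - pair_sum (L n) (L n) (\<lambda>z. f (z + t))"
    and ?e3 = "pair_sum (L' n) (L' n) f - pair_sum (L n) (L n) f"
  have decompose: "pair_sum (X \<inter> {a n..b n}) (X \<inter> {a n..b n}) f
      - (2 * pair_sum (L n) (L n) f + pair_sum (L n) (L n) (\<lambda>z. f (z - t))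
         + pair_sum (L n) (L n) (\<lambda>z. f (z + t)))
    = ?e0 + ?e1 + ?e2 + ?e3"
    unfolding window_eq translate by (simp add: algebra_simps)
  have "norm (?e0 + ?e1 + ?e2 + ?e3)
      \<le> 4 * M * overlap n + edge n * M + edge n * M + 2 * (edge n * M)"
    using union norm_pair_sum_L'_diff_le(1)[OF M_minus, of n]
      norm_pair_sum_L'_diff_le(2)[OF M_plus, of n] norm_pair_sum_L'_diff_le(3)[OF M, of n]
    by (intro norm_triangle_mono) assumption+
  moreover have "4 * M * overlap n + edge n * M + edge n * M + 2 * (edge n * M)
      = 4 * M * (overlap n + edge n)"
    by (simp add: algebra_simps)
  ultimately show ?thesis
    unfolding decompose by linarith
qed

lemma pair_sum_window_limit:
  assumes f: "Cc_fun f"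
  shows "(\<lambda>n. pair_sum (X \<inter> {a n..b n}) (X \<inter> {a n..b n}) f / of_real (N n))
    \<longlonglongrightarrow> 2 * f 0 + f (- t) + f t"
proof -
  obtain M where M: "point_sums_bounded X f M"
    using point_sums_bounded_X[OF f] by blast
  obtain E where E: "\<And>n. edge n \<le> E"
    using edge_bounded by blast
  have close: "norm (pair_sum (X \<inter> {a n..b n}) (X \<inter> {a n..b n}) f
        - (2 * pair_sum (L n) (L n) f + pair_sum (L n) (L n) (\<lambda>z. f (z - t))
           + pair_sum (L n) (L n) (\<lambda>z. f (z + t))))
      \<le> 4 * M * (overlap n + E)" for n
  proof -
    have "4 * M * (overlap n + edge n) \<le> 4 * M * (overlap n + E)"
      using E[of n] point_sums_bounded_nonneg[OF M] by (intro mult_left_mono) auto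
    then show ?thesis
      using pair_sum_window_estimate[OF M, of n] by linarith
  qed
  have "(\<lambda>n. (2 * pair_sum (L n) (L n) f + pair_sum (L n) (L n) (\<lambda>z. f (z - t))
      + pair_sum (L n) (L n) (\<lambda>z. f (z + t))) / of_real (N n)) \<longlonglongrightarrow> 2 * f 0 + f (- t) + f t"
    using tendsto_add[OF tendsto_add[OF tendsto_mult_left[OF pair_sum_L_limit[OF f], of 2]
          pair_sum_L_limit[OF Cc_fun_shift[OF f, of "- t"]]]
        pair_sum_L_limit[OF Cc_fun_shift[OF f, of t]]]
    by (simp add: add_divide_distrib)
  then show ?thesis
    by (rule tendsto_divide_of_real_perturb[OF _ overlap_negligible close N_nonneg])
qed

lemma card_window_limit: "(\<lambda>n. card (X \<inter> {a n..b n}) / N n) \<longlonglongrightarrow> 2"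
proof -
  obtain E where E: "\<And>n. edge n \<le> E"
    using edge_bounded by blast
  have "\<forall>\<^sub>F n in sequentially. 2 * N n / of_real (N n) = 2"
    using eventually_nonzero_N by eventually_elim simp
  then have twice: "(\<lambda>n. 2 * N n / of_real (N n)) \<longlonglongrightarrow> 2"
    by (rule tendsto_eventually)
  have close: "norm (card (X \<inter> {a n..b n}) - 2 * N n) \<le> (1::real) * (overlap n + E)" for n
    using card_window_estimate[of n] E[of n] by simp
  show ?thesis
    using tendsto_divide_of_real_perturb[OF twice overlap_negligible close N_nonneg] by simp
qed

theorem counting_autocorrelation_translate_union:
  "counting_autocorrelation X (\<lambda>n. {a n..b n})
     (weighted_dirac {0, t, - t} (\<lambda>x. if x = 0 then 1 else 1 / 2))"
  unfolding counting_autocorrelation_def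
proof (intro allI impI conjI)
  fix f assume f: "Cc_fun f"
  let ?w = "\<lambda>x::real. if x = 0 then 1 else 1 / 2 :: real"
  show "complex_integrable (weighted_dirac {0, t, - t} ?w) f"
    using Cc_fun_borel_measurable[OF f] by (intro integrable_weighted_dirac) auto
  have integral: "(LINT x|weighted_dirac {0, t, - t} ?w. f x) = (2 * f 0 + f (- t) + f t) / 2"
    using integral_weighted_dirac[of "{0, t, - t}" ?w f] Cc_fun_borel_measurable[OF f]
      translation_nonzero
    by (simp add: field_simps)
  have "(\<lambda>n. pair_sum (X \<inter> {a n..b n}) (X \<inter> {a n..b n}) f / of_real (card (X \<inter> {a n..b n})))
      \<longlonglongrightarrow> (2 * f 0 + f (- t) + f t) / of_real 2"
    by (rule tendsto_divide_change_denominator[OF pair_sum_window_limit[OF f] card_window_limit _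
          eventually_nonzero_N]) simp
  then show "(\<lambda>n. gamma_fin_int (X \<inter> {a n..b n}) f)
      \<longlonglongrightarrow> (LINT x|weighted_dirac {0, t, - t} ?w. f x)"
    unfolding integral gamma_fin_int_eq_pair_sum by simp
qed

end

theorem proposition3p18:
  fixes a b :: "nat \<Rightarrow> real" and A :: "nat \<Rightarrow> real set"
    and \<Lambda> :: "real set" and k :: int
  assumes intervals: "\<And>n. A n = {a n .. b n}"
    and van_Hove: "filterlim (\<lambda>n. b n - a n) at_top sequentially"
    and ud: "uniformly_discrete \<Lambda>"
    and ac: "counting_autocorrelation \<Lambda> A (weighted_dirac {0} (\<lambda>_. 1))"
    and card_inf: "filterlim (\<lambda>n. card (\<Lambda> \<inter> A n)) at_top sequentially"
    and k: "k \<noteq> 0"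
  shows "counting_autocorrelation (\<Lambda> \<union> (\<lambda>x. real_of_int k + x) ` \<Lambda>) A
           (weighted_dirac {0, real_of_int k, - real_of_int k}
              (\<lambda>x. if x = 0 then 1 else 1 / 2))
       \<and> counting_diffraction (\<Lambda> \<union> (\<lambda>x. real_of_int k + x) ` \<Lambda>) A
           (density lborel (\<lambda>x. ennreal (1 + cos (2 * pi * real_of_int k * x))))"
proof -
  have A: "A = (\<lambda>n. {a n..b n})"
    using intervals by blast
  interpret translate_union a b \<Lambda> "real_of_int k"
    using ud ac card_inf k unfolding A by unfold_locales simp_all
  show ?thesis
    unfolding A counting_diffraction_def
    using counting_autocorrelation_translate_union measure_fourier_cosine k by auto
qed

end
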